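(* Let $G$ be a graph and $k > \Gamma(G)$ an integer. If $D_k(G)$ is connected, then $D_{k+1}(G)$ is connected.
   Context: All graphs are finite and simple. A set $S \subseteq V(G)$ is a dominating set of $G$ if every vertex of $V(G)\setminus S$ is adjacent to a vertex of $S$; it is a minimal dominating set if no proper subset of it is a dominating set. $\gamma(G)$ is the minimum cardinality of a dominating set of $G$, and $\Gamma(G)$ is the maximum cardinality of a minimal dominating set of $G$. For an integer $k \ge \gamma(G)$, the $k$-dominating graph $D_k(G)$ is the graph whose vertices are the dominating sets of $G$ of cardinality at most $k$, with two such sets $A,B$ adjacent if and only if their symmetric difference $(A\setminus B)\cup(B\setminus A)$ consists of exactly one vertex of $G$. *)

theory Defs
  imports Main
begin

definition simple_graph :: "'a set \<Rightarrow> ('a \<Rightarrow> 'a \<Rightarrow> bool) \<Rightarrow> bool" where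
  "simple_graph V E \<longleftrightarrow> finite V \<and> (\<forall>u v. E u v \<longrightarrow> u \<in> V \<and> v \<in> V)
     \<and> (\<forall>u v. E u v \<longrightarrow> E v u) \<and> (\<forall>v. \<not> E v v)"

definition dominating_set :: "'a set \<Rightarrow> ('a \<Rightarrow> 'a \<Rightarrow> bool) \<Rightarrow> 'a set \<Rightarrow> bool" where
  "dominating_set V E S \<longleftrightarrow> S \<subseteq> V \<and> (\<forall>v \<in> V - S. \<exists>u \<in> S. E v u)"

definition minimal_dominating_set :: "'a set \<Rightarrow> ('a \<Rightarrow> 'a \<Rightarrow> bool) \<Rightarrow> 'a set \<Rightarrow> bool" where
  "minimal_dominating_set V E S \<longleftrightarrow> dominating_set V E S \<and>
     (\<forall>T. T \<subset> S \<longrightarrow> \<not> dominating_set V E T)"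

definition domination_number :: "'a set \<Rightarrow> ('a \<Rightarrow> 'a \<Rightarrow> bool) \<Rightarrow> nat" where
  "domination_number V E = Min (card ` {S. dominating_set V E S})"

definition upper_domination_number :: "'a set \<Rightarrow> ('a \<Rightarrow> 'a \<Rightarrow> bool) \<Rightarrow> nat" where
  "upper_domination_number V E = Max (card ` {S. minimal_dominating_set V E S})"

definition dom_graph_vertices :: "'a set \<Rightarrow> ('a \<Rightarrow> 'a \<Rightarrow> bool) \<Rightarrow> nat \<Rightarrow> 'a set set" where
  "dom_graph_vertices V E k = {S. dominating_set V E S \<and> card S \<le> k}"

definition dom_graph_adj :: "'a set \<Rightarrow> ('a \<Rightarrow> 'a \<Rightarrow> bool) \<Rightarrow> nat \<Rightarrow> 'a set \<Rightarrow> 'a set \<Rightarrow> bool" where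
  "dom_graph_adj V E k A B \<longleftrightarrow> A \<in> dom_graph_vertices V E k \<and> B \<in> dom_graph_vertices V E k
     \<and> (\<exists>x. (A - B) \<union> (B - A) = {x})"

definition graph_connected :: "'b set \<Rightarrow> ('b \<Rightarrow> 'b \<Rightarrow> bool) \<Rightarrow> bool" where
  "graph_connected W adj \<longleftrightarrow> (\<forall>a \<in> W. \<forall>b \<in> W. adj\<^sup>*\<^sup>* a b)"

definition dom_graph_connected :: "'a set \<Rightarrow> ('a \<Rightarrow> 'a \<Rightarrow> bool) \<Rightarrow> nat \<Rightarrow> bool" where
  "dom_graph_connected V E k \<longleftrightarrow>
     graph_connected (dom_graph_vertices V E k) (dom_graph_adj V E k)"

end

theory Submission
  imports Defs
begin

(* A dominating set S with |S| = k + 1 exceeds Gamma(G), so it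
   is not minimal; hence some vertex x of S can be removed and S - {x} is still
   dominating.  Thus every vertex of D_{k+1}(G) either lies in D_k(G) or is
   adjacent in D_{k+1}(G) to a vertex of D_k(G).  Since D_k(G) is a subgraph of
   D_{k+1}(G), two vertices of D_{k+1}(G) are joined by going down to D_k(G),
   walking inside D_k(G), and going back up. *)

(* A graph is connected if it contains a connected subgraph that every vertex
   can reach.  Symmetry of the adjacency is needed to walk back up. *)
lemma graph_connected_via_connected_subgraph:
  assumes sub_conn: "graph_connected W adj"
    and sub_vertices: "W \<subseteq> W'"
    and sub_edges: "adj \<le> adj'"
    and sym: "symp adj'"
    and reach: "\<And>a. a \<in> W' \<Longrightarrow> \<exists>w \<in> W. adj'\<^sup>*\<^sup>* a w"
  shows "graph_connected W' adj'"
  unfolding graph_connected_def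
proof (intro ballI)
  fix a b assume "a \<in> W'" "b \<in> W'"
  then obtain wa wb where wa: "wa \<in> W" "adj'\<^sup>*\<^sup>* a wa" and wb: "wb \<in> W" "adj'\<^sup>*\<^sup>* b wb"
    using reach by blast
  have "adj\<^sup>*\<^sup>* wa wb"
    using sub_conn wa(1) wb(1) unfolding graph_connected_def by blast
  then have middle: "adj'\<^sup>*\<^sup>* wa wb"
    using rtranclp_mono[OF sub_edges] by blast
  have walk_back: "adj'\<^sup>*\<^sup>* wb b"
    using wb(2) sympD[OF symp_rtranclp[OF sym]] by blast
  show "adj'\<^sup>*\<^sup>* a b"
    using wa(2) middle walk_back by (meson rtranclp_trans)
qed

lemma dominating_set_mono:
  assumes "dominating_set V E T" "T \<subseteq> S" "S \<subseteq> V"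
  shows "dominating_set V E S"
  using assms unfolding dominating_set_def by blast

lemma card_minimal_dominating_set_le:
  assumes "finite V" and "minimal_dominating_set V E S"
  shows "card S \<le> upper_domination_number V E"
proof -
  have "{S. minimal_dominating_set V E S} \<subseteq> Pow V"
    unfolding minimal_dominating_set_def dominating_set_def by blast
  then have "finite (card ` {S. minimal_dominating_set V E S})"
    using assms(1) by (meson finite_Pow_iff finite_imageI finite_subset)
  then show ?thesis
    unfolding upper_domination_number_def using assms(2) by (simp add: Max_ge)
qed

(* A dominating set that is not minimal has a single redundant vertex:
   any vertex outside a dominating proper subset can be dropped. *)
lemma non_minimal_dominating_set_remove:
  assumes "dominating_set V E S" and "\<not> minimal_dominating_set V E S"
  shows "\<exists>x \<in> S. dominating_set V E (S - {x})"
proof -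
  obtain T where T: "T \<subset> S" "dominating_set V E T"
    using assms unfolding minimal_dominating_set_def by blast
  then obtain x where x: "x \<in> S" "x \<notin> T" by blast
  have "T \<subseteq> S - {x}"
    using T(1) x(2) by blast
  moreover have "S - {x} \<subseteq> V"
    using assms(1) unfolding dominating_set_def by blast
  ultimately have "dominating_set V E (S - {x})"
    by (rule dominating_set_mono[OF T(2)])
  with x(1) show ?thesis by blast
qed

lemma large_dominating_set_remove:
  assumes "finite V" and "dominating_set V E S"
    and "card S > upper_domination_number V E"
  shows "\<exists>x \<in> S. dominating_set V E (S - {x})"
proof (rule non_minimal_dominating_set_remove[OF assms(2)])
  show "\<not> minimal_dominating_set V E S"
    using card_minimal_dominating_set_le[OF assms(1)] assms(3) by (meson leD)
qed

lemma dom_graph_adj_sym: "symp (dom_graph_adj V E k)"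
  unfolding dom_graph_adj_def by (intro sympI) (simp add: Un_commute)

lemma dom_graph_vertices_mono:
  "k \<le> l \<Longrightarrow> dom_graph_vertices V E k \<subseteq> dom_graph_vertices V E l"
  unfolding dom_graph_vertices_def by auto

lemma dom_graph_adj_mono:
  assumes "k \<le> l"
  shows "dom_graph_adj V E k \<le> dom_graph_adj V E l"
proof (intro predicate2I)
  fix A B assume "dom_graph_adj V E k A B"
  then show "dom_graph_adj V E l A B"
    using dom_graph_vertices_mono[OF assms] unfolding dom_graph_adj_def
    by (elim conjE) (intro conjI; (assumption | blast))
qed

lemma dom_graph_adj_remove:
  assumes "S \<in> dom_graph_vertices V E l" and "x \<in> S"
    and "dominating_set V E (S - {x})"
  shows "dom_graph_adj V E l S (S - {x})"
proof -
  have "S - {x} \<in> dom_graph_vertices V E l"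
    using assms(1,3) card_Diff1_le[of S x] unfolding dom_graph_vertices_def by simp
  moreover have "(S - (S - {x})) \<union> ((S - {x}) - S) = {x}"
    using assms(2) by blast
  ultimately show ?thesis
    using assms(1) unfolding dom_graph_adj_def by (intro conjI exI)
qed

lemma dom_graph_reaches_smaller:
  assumes "finite V" and k: "k > upper_domination_number V E"
    and S: "S \<in> dom_graph_vertices V E (k + 1)"
  shows "\<exists>S' \<in> dom_graph_vertices V E k. (dom_graph_adj V E (k + 1))\<^sup>*\<^sup>* S S'"
proof (cases "card S \<le> k")
  case True
  then show ?thesis using S unfolding dom_graph_vertices_def by blast
next
  case False
  then have card_S: "card S = k + 1" and dom_S: "dominating_set V E S"
    using S unfolding dom_graph_vertices_def by auto
  then obtain x where x: "x \<in> S" "dominating_set V E (S - {x})"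
    using large_dominating_set_remove[OF assms(1)] k by fastforce
  have "finite S"
    using card_S card.infinite by fastforce
  then have "S - {x} \<in> dom_graph_vertices V E k"
    using x card_S unfolding dom_graph_vertices_def by simp
  moreover have "dom_graph_adj V E (k + 1) S (S - {x})"
    using dom_graph_adj_remove[OF S x] .
  ultimately show ?thesis by blast
qed

theorem lemma4:
  fixes V :: "'a set" and E :: "'a \<Rightarrow> 'a \<Rightarrow> bool" and k :: nat
  assumes "simple_graph V E"
    and "k > upper_domination_number V E"
    and "dom_graph_connected V E k"
  shows "dom_graph_connected V E (k + 1)"
proof -
  have "finite V"
    using assms(1) unfolding simple_graph_def by blast
  then have "\<And>S. S \<in> dom_graph_vertices V E (k + 1) \<Longrightarrow>
      \<exists>S' \<in> dom_graph_vertices V E k. (dom_graph_adj V E (k + 1))\<^sup>*\<^sup>* S S'"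
    using dom_graph_reaches_smaller assms(2) by blast
  moreover have "dom_graph_vertices V E k \<subseteq> dom_graph_vertices V E (k + 1)"
    and "dom_graph_adj V E k \<le> dom_graph_adj V E (k + 1)"
    by (simp_all add: dom_graph_vertices_mono dom_graph_adj_mono)
  ultimately show ?thesis
    using assms(3) graph_connected_via_connected_subgraph dom_graph_adj_sym
    unfolding dom_graph_connected_def by metis
qed

end
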